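(* Assume A1, A2, A4 and A5, and let $t,r\in\mathbb N_+$. Then \[ \frac{(1-\sup_{i\in S}q_i)^r}{\mathbb E(|\boldsymbol Y_t|^r)}\le\mathbb E\Big(\frac{1}{|\boldsymbol Z_t|^r}\,\Big|\,|\boldsymbol Z_t|>0\Big), \] where $\boldsymbol Y=\boldsymbol Y^{i_0}$ is the Harris–Sevastyanov transform of $\boldsymbol Z^{i_0}$.
   Context: Setting. Type space $S=[d]$ if $d<\infty$, $S=\mathbb N_+$ if $d=\infty$. $\boldsymbol Z^{i_0}=(\boldsymbol Z^{i_0}_t)_{t\ge0}$ is a multi-type Galton–Watson process on $\mathbb N_0^d$ started from one type-$i_0$ individual: each individual of type $i$ independently produces an offspring vector with law $p_i$; $|\boldsymbol Z_t|$ is the total generation-$t$ size. Mean matrix $\boldsymbol M=(\mathbb E Z_1^{i,j})$, powers $m^{(r)}_{ij}$. A1: $\boldsymbol M$ irreducible and all $m^{(r)}_{ij}$ finite; $R$ is the common radius of convergence of $\sum_n m^{(n)}_{ij}z^n$. A2: $\sum_n m^{(n)}_{ij}R^n=\infty$ for all $i,j$; the strictly positive $\boldsymbol\nu,\boldsymbol u$ with $R\boldsymbol\nu\boldsymbol M=\boldsymbol\nu$, $R\boldsymbol M\boldsymbol u=\boldsymbol u$ satisfy $\boldsymbol u\cdot\boldsymbol\nu<\infty$ (normalised $\boldsymbol u\cdot\boldsymbol\nu=1$, $\sum\nu_i=1$); $R\in(0,1)$. $q_i$ = extinction probability from a type-$i$ root, $\boldsymbol q=(q_i)$. A4: $\sup_iq_i<1$.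 A5: $\inf_iu_i>0$. Generating functions $f^i(\boldsymbol s)=\sum_{\boldsymbol w}p_i(\boldsymbol w)\prod_js_j^{w_j}$, $\boldsymbol f=(f^i)$. Harris–Sevastyanov transform: the multi-type Galton–Watson process $\boldsymbol Y$ with $\boldsymbol Y_0=\boldsymbol Z_0$ whose offspring generating functions are $\boldsymbol F(\boldsymbol s)=(\boldsymbol f(\boldsymbol s\odot(\boldsymbol 1-\boldsymbol q)+\boldsymbol q)-\boldsymbol q)\oslash(\boldsymbol 1-\boldsymbol q)$ ($\odot,\oslash$ elementwise product/quotient). *)

theory Defs
  imports "HOL-Probability.Probability"
begin

text \<open>Types are natural numbers; the type space S is either {..<d} (d >= 1) or UNIV.
  An offspring/population vector is a function nat => nat with finite support.\<close>

definition popsize :: "(nat \<Rightarrow> nat) \<Rightarrow> nat" where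
  "popsize z = sum z {j. z j \<noteq> 0}"

definition individuals :: "(nat \<Rightarrow> nat) \<Rightarrow> nat list" where
  "individuals z = concat (map (\<lambda>j. replicate (z j) j) (sorted_list_of_set {j. z j \<noteq> 0}))"

fun offspring_sum :: "(nat \<Rightarrow> (nat \<Rightarrow> nat) pmf) \<Rightarrow> nat list \<Rightarrow> (nat \<Rightarrow> nat) pmf" where
  "offspring_sum p [] = return_pmf (\<lambda>_. 0)"
| "offspring_sum p (i # is) =
     bind_pmf (p i) (\<lambda>w. map_pmf (\<lambda>v. (\<lambda>j. w j + v j)) (offspring_sum p is))"

primrec gw :: "(nat \<Rightarrow> (nat \<Rightarrow> nat) pmf) \<Rightarrow> nat \<Rightarrow> nat \<Rightarrow> (nat \<Rightarrow> nat) pmf" where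
  "gw p i0 0 = return_pmf (\<lambda>j. if j = i0 then 1 else 0)"
| "gw p i0 (Suc t) = bind_pmf (gw p i0 t) (\<lambda>z. offspring_sum p (individuals z))"

text \<open>Extinction probability from a type-i root: P(exists t. |Z_t| = 0) = sup_t P(|Z_t| = 0).\<close>
definition ext_prob :: "(nat \<Rightarrow> (nat \<Rightarrow> nat) pmf) \<Rightarrow> nat \<Rightarrow> real" where
  "ext_prob p i = (SUP t. measure_pmf.prob (gw p i t) {z. popsize z = 0})"

definition mean_matrix :: "(nat \<Rightarrow> (nat \<Rightarrow> nat) pmf) \<Rightarrow> nat \<Rightarrow> nat \<Rightarrow> ennreal" where
  "mean_matrix p i j = (\<integral>\<^sup>+ w. of_nat (w j) \<partial>measure_pmf (p i))"

primrec mpow :: "(nat \<Rightarrow> (nat \<Rightarrow> nat) pmf) \<Rightarrow> nat set \<Rightarrow> nat \<Rightarrow> nat \<Rightarrow> nat \<Rightarrow> ennreal" where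
  "mpow p S 0 i j = (if i = j then 1 else 0)"
| "mpow p S (Suc n) i j = (\<integral>\<^sup>+ k. mpow p S n i k * mean_matrix p k j \<partial>count_space S)"

definition pgf :: "(nat \<Rightarrow> (nat \<Rightarrow> nat) pmf) \<Rightarrow> nat \<Rightarrow> (nat \<Rightarrow> real) \<Rightarrow> real" where
  "pgf p i s = measure_pmf.expectation (p i) (\<lambda>w. \<Prod>j\<in>{j. w j \<noteq> 0}. s j ^ w j)"

definition fin_vecs :: "nat set \<Rightarrow> (nat \<Rightarrow> nat) set" where
  "fin_vecs S = {w. finite {j. w j \<noteq> 0} \<and> (\<forall>j. w j \<noteq> 0 \<longrightarrow> j \<in> S)}"

end

theory Submission
  imports Defs
begin

text \<open>Retain each individual of type i in generation t of Z independently with probability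
  1 - q_i. By the Harris--Sevastyanov relation the generating function of the number of retained
  individuals is f_t(x(1 - q) + q) = q_i0 + (1 - q_i0) E x^|Y_t|, so this number is |Y_t| with
  probability 1 - q_i0 and 0 otherwise. Given Z_t its mean is at least (1 - sup q) |Z_t|, and
  Jensen's inequality yields (1 - sup q)^r E |Z_t|^r <= (1 - q_i0) E |Y_t|^r. Since
  1 - q_i0 <= P(|Z_t| > 0) and, by Cauchy--Schwarz,
  P(|Z_t| > 0)^2 <= E |Z_t|^r E (|Z_t|^-r; |Z_t| > 0), the bound follows.\<close>

section \<open>Multivariate generating functions\<close>

definition vec_power :: "(nat \<Rightarrow> real) \<Rightarrow> (nat \<Rightarrow> nat) \<Rightarrow> real" where
  "vec_power s w = (\<Prod>j\<in>{j. w j \<noteq> 0}. s j ^ w j)"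

definition vec_pgf :: "(nat \<Rightarrow> nat) pmf \<Rightarrow> (nat \<Rightarrow> real) \<Rightarrow> real" where
  "vec_pgf \<mu> s = measure_pmf.expectation \<mu> (vec_power s)"

definition unit_cube :: "(nat \<Rightarrow> real) set" where
  "unit_cube = {s. \<forall>j. 0 \<le> s j \<and> s j \<le> 1}"

lemma pgf_eq_vec_pgf: "pgf p i s = vec_pgf (p i) s"
  unfolding pgf_def vec_pgf_def vec_power_def ..

lemma vec_power_eq_prod_superset:
  assumes "finite A" "{j. w j \<noteq> 0} \<subseteq> A"
  shows "vec_power s w = (\<Prod>j\<in>A. s j ^ w j)"
  unfolding vec_power_def using assms by (intro prod.mono_neutral_left) auto

lemma vec_power_add:
  assumes "finite {j. w j \<noteq> 0}" "finite {j. v j \<noteq> 0}"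
  shows "vec_power s (\<lambda>j. w j + v j) = vec_power s w * vec_power s v"
proof -
  let ?A = "{j. w j \<noteq> 0} \<union> {j. v j \<noteq> 0}"
  have "vec_power s (\<lambda>j. w j + v j) = (\<Prod>j\<in>?A. s j ^ w j) * (\<Prod>j\<in>?A. s j ^ v j)"
    using assms by (subst vec_power_eq_prod_superset[of ?A]) (auto simp: power_add prod.distrib)
  also have "\<dots> = vec_power s w * vec_power s v"
    using assms by (subst (1 2) vec_power_eq_prod_superset[of ?A]) auto
  finally show ?thesis .
qed

lemma vec_power_const: "vec_power (\<lambda>_. x) w = x ^ popsize w"
  unfolding vec_power_def popsize_def by (simp add: power_sum)

lemma vec_power_cong:
  assumes "w \<in> fin_vecs S" "\<And>j. j \<in> S \<Longrightarrow> s j = s' j"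
  shows "vec_power s w = vec_power s' w"
  using assms unfolding vec_power_def fin_vecs_def by (intro prod.cong) auto

lemma vec_power_unit_cube:
  assumes "s \<in> unit_cube"
  shows "0 \<le> vec_power s w" "vec_power s w \<le> 1"
  using assms unfolding vec_power_def unit_cube_def
  by (auto intro!: prod_nonneg prod_le_1 power_le_one)

lemma nn_integral_vec_power:
  fixes \<mu> :: "(nat \<Rightarrow> nat) pmf"
  assumes "s \<in> unit_cube"
  shows "(\<integral>\<^sup>+w. ennreal (vec_power s w) \<partial>\<mu>) = ennreal (vec_pgf \<mu> s)"
  unfolding vec_pgf_def using vec_power_unit_cube[OF assms]
  by (intro nn_integral_eq_integral measure_pmf.integrable_const_bound[where B=1]) auto

lemma vec_pgf_unit_cube:
  assumes "s \<in> unit_cube"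
  shows "0 \<le> vec_pgf \<mu> s" "vec_pgf \<mu> s \<le> 1"
proof -
  have "(\<integral>\<^sup>+w. ennreal (vec_power s w) \<partial>\<mu>) \<le> (\<integral>\<^sup>+w. 1 \<partial>\<mu>)"
    using vec_power_unit_cube[OF assms] by (intro nn_integral_mono) auto
  then show "vec_pgf \<mu> s \<le> 1"
    using nn_integral_vec_power[OF assms, of \<mu>] by (simp add: ennreal_le_1)
  show "0 \<le> vec_pgf \<mu> s"
    unfolding vec_pgf_def using vec_power_unit_cube[OF assms] by (simp add: integral_nonneg_AE)
qed

lemma vec_pgf_cong:
  assumes "set_pmf \<mu> \<subseteq> fin_vecs S" "\<And>j. j \<in> S \<Longrightarrow> s j = s' j"
  shows "vec_pgf \<mu> s = vec_pgf \<mu> s'"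
  unfolding vec_pgf_def using assms
  by (intro integral_cong_AE) (auto simp: AE_measure_pmf_iff intro: vec_power_cong)

lemma pgf_unit_cube: "s \<in> unit_cube \<Longrightarrow> (\<lambda>j. pgf p j s) \<in> unit_cube"
  using vec_pgf_unit_cube by (auto simp: unit_cube_def pgf_eq_vec_pgf)

lemma fin_vecs_add: "w \<in> fin_vecs S \<Longrightarrow> v \<in> fin_vecs S \<Longrightarrow> (\<lambda>j. w j + v j) \<in> fin_vecs S"
  unfolding fin_vecs_def
  by (auto intro: finite_subset[of _ "{j. w j \<noteq> 0} \<union> {j. v j \<noteq> 0}"])

lemma set_pmf_offspring_sum:
  assumes "\<forall>i\<in>S. set_pmf (p i) \<subseteq> fin_vecs S" "set is \<subseteq> S"
  shows "set_pmf (offspring_sum p is) \<subseteq> fin_vecs S"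
  using assms(2)
proof (induction "is")
  case (Cons i "is")
  then show ?case using assms(1) by (auto intro!: fin_vecs_add)
qed (simp add: fin_vecs_def)

lemma set_individuals:
  "finite {j. z j \<noteq> 0} \<Longrightarrow> set (individuals z) = {j. z j \<noteq> 0}"
  unfolding individuals_def by auto

lemma prod_list_individuals:
  fixes f :: "nat \<Rightarrow> 'a::comm_monoid_mult"
  assumes "finite {j. z j \<noteq> 0}"
  shows "(\<Prod>i\<leftarrow>individuals z. f i) = (\<Prod>j\<in>{j. z j \<noteq> 0}. f j ^ z j)"
proof -
  have "(\<Prod>i\<leftarrow>concat (map (\<lambda>j. replicate (z j) j) js). f i) = (\<Prod>j\<leftarrow>js. f j ^ z j)" for js
    by (induction js) auto
  then show ?thesis
    unfolding individuals_def using assms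
    by (simp add: prod.distinct_set_conv_list[symmetric])
qed

lemma length_individuals:
  "finite {j. z j \<noteq> 0} \<Longrightarrow> length (individuals z) = popsize z"
  unfolding individuals_def popsize_def
  by (simp add: length_concat comp_def sum_list_distinct_conv_sum_set)

lemma set_pmf_gw:
  assumes "\<forall>i\<in>S. set_pmf (p i) \<subseteq> fin_vecs S" "i0 \<in> S"
  shows "set_pmf (gw p i0 t) \<subseteq> fin_vecs S"
proof (induction t)
  case 0
  then show ?case using assms(2) by (auto simp: fin_vecs_def)
next
  case (Suc t)
  have "set (individuals z) \<subseteq> S" if "z \<in> set_pmf (gw p i0 t)" for z
    using that Suc set_individuals[of z] by (auto simp: fin_vecs_def)
  then show ?case
    using set_pmf_offspring_sum[OF assms(1)] by fastforce
qed

lemma individuals_gw: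
  assumes "\<forall>i\<in>S. set_pmf (p i) \<subseteq> fin_vecs S" "i0 \<in> S" "z \<in> set_pmf (gw p i0 t)"
  shows "finite {j. z j \<noteq> 0}" "set (individuals z) \<subseteq> S"
  using set_pmf_gw[OF assms(1,2)] assms(3) set_individuals[of z] by (auto simp: fin_vecs_def)

lemma vec_pgf_offspring_sum:
  assumes "\<forall>i\<in>S. set_pmf (p i) \<subseteq> fin_vecs S" "set is \<subseteq> S" "s \<in> unit_cube"
  shows "vec_pgf (offspring_sum p is) s = (\<Prod>i\<leftarrow>is. pgf p i s)"
  using assms(2)
proof (induction "is")
  case Nil
  then show ?case by (simp add: vec_pgf_def vec_power_def)
next
  case (Cons i "is")
  let ?G = "\<lambda>\<mu>. \<integral>\<^sup>+w. ennreal (vec_power s w) \<partial>measure_pmf \<mu>"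
  have fin: "finite {j. w j \<noteq> 0}" if "w \<in> set_pmf (p i) \<union> set_pmf (offspring_sum p is)" for w
    using that Cons.prems assms(1) set_pmf_offspring_sum[OF assms(1), of "is"]
    by (auto simp: fin_vecs_def)
  have "?G (offspring_sum p (i # is)) =
      (\<integral>\<^sup>+w. \<integral>\<^sup>+v. ennreal (vec_power s w) * ennreal (vec_power s v) \<partial>offspring_sum p is \<partial>p i)"
    using fin vec_power_unit_cube[OF assms(3)]
    by (auto simp: map_pmf_def[symmetric] AE_measure_pmf_iff vec_power_add ennreal_mult
             intro!: nn_integral_cong_AE)
  also have "\<dots> = ?G (p i) * ?G (offspring_sum p is)"
    by (simp add: nn_integral_cmult nn_integral_multc)
  finally have "vec_pgf (offspring_sum p (i # is)) s = vec_pgf (p i) s * vec_pgf (offspring_sum p is) s"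
    using vec_pgf_unit_cube[OF assms(3)]
    by (simp add: nn_integral_vec_power[OF assms(3)] ennreal_mult[symmetric])
  then show ?case
    using Cons by (simp add: pgf_eq_vec_pgf)
qed

lemma vec_pgf_gw_Suc:
  assumes supp: "\<forall>i\<in>S. set_pmf (p i) \<subseteq> fin_vecs S" and "i0 \<in> S" and s: "s \<in> unit_cube"
  shows "vec_pgf (gw p i0 (Suc t)) s = vec_pgf (gw p i0 t) (\<lambda>j. pgf p j s)"
proof -
  have fs: "(\<lambda>j. pgf p j s) \<in> unit_cube"
    using s by (rule pgf_unit_cube)
  have "ennreal (vec_pgf (gw p i0 (Suc t)) s) =
      (\<integral>\<^sup>+z. ennreal (vec_pgf (offspring_sum p (individuals z)) s) \<partial>gw p i0 t)"
    by (simp add: nn_integral_vec_power[OF s, symmetric])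
  also have "\<dots> = (\<integral>\<^sup>+z. ennreal (vec_power (\<lambda>j. pgf p j s) z) \<partial>gw p i0 t)"
  proof (intro nn_integral_cong_AE, unfold AE_measure_pmf_iff, intro ballI)
    fix z assume "z \<in> set_pmf (gw p i0 t)"
    note z = individuals_gw[OF supp \<open>i0 \<in> S\<close> this]
    show "ennreal (vec_pgf (offspring_sum p (individuals z)) s) = ennreal (vec_power (\<lambda>j. pgf p j s) z)"
      by (simp add: vec_pgf_offspring_sum[OF supp z(2) s] prod_list_individuals[OF z(1)] vec_power_def)
  qed
  also have "\<dots> = ennreal (vec_pgf (gw p i0 t) (\<lambda>j. pgf p j s))"
    by (rule nn_integral_vec_power[OF fs])
  finally show ?thesis
    using vec_pgf_unit_cube fs s by simp
qed

lemma affine_shift_unit_cube: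
  assumes "s \<in> unit_cube" "\<forall>j. 0 \<le> q j \<and> q j \<le> 1"
  shows "(\<lambda>j. s j * (1 - q j) + q j) \<in> unit_cube"
  unfolding unit_cube_def
proof (intro CollectI allI)
  fix j
  have "0 \<le> q j" "q j \<le> 1" "0 \<le> s j * (1 - q j)" "s j * (1 - q j) \<le> 1 - q j"
    using assms by (auto simp: unit_cube_def mult_left_le_one_le)
  then show "0 \<le> s j * (1 - q j) + q j \<and> s j * (1 - q j) + q j \<le> 1"
    by linarith
qed

lemma vec_pgf_gw_transform:
  fixes q :: "nat \<Rightarrow> real"
  assumes supp: "\<forall>i\<in>S. set_pmf (p i) \<subseteq> fin_vecs S"
    and suppY: "\<forall>i\<in>S. set_pmf (pY i) \<subseteq> fin_vecs S"
    and i0: "i0 \<in> S"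
    and q: "\<forall>j. 0 \<le> q j \<and> q j \<le> 1" "\<forall>j\<in>S. q j < 1"
    and transform: "\<forall>i\<in>S. \<forall>s. (\<forall>j. 0 \<le> s j \<and> s j \<le> 1) \<longrightarrow>
              pgf pY i s = (pgf p i (\<lambda>j. s j * (1 - q j) + q j) - q i) / (1 - q i)"
    and s: "s \<in> unit_cube"
  shows "vec_pgf (gw pY i0 t) s =
    (vec_pgf (gw p i0 t) (\<lambda>j. s j * (1 - q j) + q j) - q i0) / (1 - q i0)"
  using s
proof (induction t arbitrary: s)
  case 0
  have "{j. (if j = i0 then 1 else 0 :: nat) \<noteq> 0} = {i0}" "1 - q i0 \<noteq> 0"
    using q i0 by auto
  then show ?case
    by (simp add: vec_pgf_def vec_power_def field_simps)
next
  case (Suc t)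
  let ?\<phi> = "\<lambda>s j. s j * (1 - q j) + q j"
  let ?F = "\<lambda>j. pgf pY j s"
  have "vec_pgf (gw pY i0 (Suc t)) s = vec_pgf (gw pY i0 t) ?F"
    by (rule vec_pgf_gw_Suc[OF suppY i0 Suc.prems])
  also have "\<dots> = (vec_pgf (gw p i0 t) (?\<phi> ?F) - q i0) / (1 - q i0)"
    by (rule Suc.IH[OF pgf_unit_cube[OF Suc.prems]])
  also have "vec_pgf (gw p i0 t) (?\<phi> ?F) = vec_pgf (gw p i0 t) (\<lambda>j. pgf p j (?\<phi> s))"
  proof (rule vec_pgf_cong[OF set_pmf_gw[OF supp i0]])
    fix j assume "j \<in> S"
    then have "1 - q j \<noteq> 0"
      using q by auto
    then show "?\<phi> ?F j = pgf p j (?\<phi> s)"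
      using transform \<open>j \<in> S\<close> Suc.prems by (simp add: unit_cube_def)
  qed
  also have "\<dots> = vec_pgf (gw p i0 (Suc t)) (?\<phi> s)"
    by (rule vec_pgf_gw_Suc[OF supp i0 affine_shift_unit_cube[OF Suc.prems q(1)], symmetric])
  finally show ?case .
qed

section \<open>Uniqueness of generating functions\<close>

lemma powser_vanishing_on_unit_interval:
  fixes a :: "nat \<Rightarrow> real"
  assumes "\<And>n. \<bar>a n\<bar> \<le> B" "\<And>x. 0 < x \<Longrightarrow> x < 1 \<Longrightarrow> (\<lambda>n. a n * x ^ n) sums 0"
  shows "a n = 0"
proof -
  have head: "a 0 = 0"
    if bounded: "\<And>n. \<bar>a n\<bar> \<le> B" and zero: "\<And>x. 0 < x \<Longrightarrow> x < 1 \<Longrightarrow> (\<lambda>n. a n * x ^ n) sums 0"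
    for a :: "nat \<Rightarrow> real"
  proof -
    let ?h = "\<lambda>x. \<Sum>n. a n * x ^ n"
    have "summable (\<lambda>n. a n * (1/2) ^ n)"
      by (rule summable_comparison_test[OF _ summable_mult[OF summable_geometric[of "1/2"], of B]])
         (use bounded in \<open>auto simp: abs_mult intro!: exI[of _ 0] mult_right_mono\<close>)
    then have "isCont ?h 0"
      by (rule isCont_powser) simp
    then have "(?h \<longlongrightarrow> a 0) (at_right 0)"
      by (simp add: isCont_def filterlim_at_split)
    moreover have "eventually (\<lambda>x. ?h x = 0) (at_right (0::real))"
      unfolding eventually_at_right_field using zero sums_unique
      by (intro exI[of _ 1]) fastforce
    then have "(?h \<longlongrightarrow> 0) (at_right 0)"
      by (rule tendsto_eventually)
    ultimately show "a 0 = 0"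
      using tendsto_unique trivial_limit_at_right_real by blast
  qed
  from assms show ?thesis
  proof (induction n arbitrary: a)
    case 0
    then show ?case by (rule head)
  next
    case (Suc n)
    have "(\<lambda>k. a (Suc k) * x ^ k) sums 0" if "0 < x" "x < 1" for x :: real
    proof -
      have summ: "summable (\<lambda>k. a k * x ^ k)"
        using Suc.prems(2)[OF that] by (rule sums_summable)
      have "(\<Sum>k. a (Suc k) * x ^ k) * x = 0"
        using powser_split_head(2)[OF summ] head[OF Suc.prems] Suc.prems(2)[OF that]
        by (simp add: sums_iff)
      then show ?thesis
        using that powser_split_head(3)[OF summ] by (simp add: sums_iff)
    qed
    then show ?case
      using Suc.IH[of "\<lambda>k. a (Suc k)"] Suc.prems(1) by blast
  qed
qed

lemma nn_integral_pmf_nat_power: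
  fixes M :: "nat pmf" and x :: real
  assumes "0 \<le> x" "x < 1"
  shows "summable (\<lambda>k. pmf M k * x ^ k)"
    and "(\<integral>\<^sup>+k. ennreal (x ^ k) \<partial>M) = ennreal (\<Sum>k. pmf M k * x ^ k)"
proof -
  show summ: "summable (\<lambda>k. pmf M k * x ^ k)"
    by (rule summable_comparison_test[OF _ summable_geometric[of x]])
       (use assms in \<open>auto intro!: exI[of _ 0] mult_left_le_one_le simp: pmf_le_1\<close>)
  have "(\<integral>\<^sup>+k. ennreal (x ^ k) \<partial>M) = (\<Sum>k. ennreal (pmf M k * x ^ k))"
    by (simp add: nn_integral_measure_pmf nn_integral_count_space_nat ennreal_mult assms)
  also have "\<dots> = ennreal (\<Sum>k. pmf M k * x ^ k)"
    by (rule suminf_ennreal2[OF _ summ]) (use assms in auto)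
  finally show "(\<integral>\<^sup>+k. ennreal (x ^ k) \<partial>M) = ennreal (\<Sum>k. pmf M k * x ^ k)" .
qed

lemma pmf_eqI_pgf:
  fixes M N :: "nat pmf"
  assumes "\<And>x::real. 0 < x \<Longrightarrow> x < 1 \<Longrightarrow> (\<integral>\<^sup>+k. ennreal (x ^ k) \<partial>M) = (\<integral>\<^sup>+k. ennreal (x ^ k) \<partial>N)"
  shows "M = N"
proof (rule pmf_eqI)
  fix k
  have "\<bar>pmf M n - pmf N n\<bar> \<le> 1" for n
    unfolding abs_le_iff using pmf_le_1[of M n] pmf_le_1[of N n] pmf_nonneg[of M n] pmf_nonneg[of N n]
    by linarith
  moreover have "(\<lambda>n. (pmf M n - pmf N n) * x ^ n) sums 0" if "0 < x" "x < 1" for x :: real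
  proof -
    have "(\<Sum>n. pmf M n * x ^ n) = (\<Sum>n. pmf N n * x ^ n)"
      using assms[OF that] nn_integral_pmf_nat_power[of x] that
      by (simp add: suminf_nonneg)
    then show ?thesis
      using sums_diff[OF nn_integral_pmf_nat_power(1)[of x M, THEN summable_sums]
                         nn_integral_pmf_nat_power(1)[of x N, THEN summable_sums]] that
      by (simp add: left_diff_distrib)
  qed
  ultimately have "pmf M k - pmf N k = 0"
    by (rule powser_vanishing_on_unit_interval)
  then show "pmf M k = pmf N k" by simp
qed

section \<open>Thinning\<close>

fun thinning :: "(nat \<Rightarrow> real) \<Rightarrow> nat list \<Rightarrow> nat pmf" where
  "thinning q [] = return_pmf 0"
| "thinning q (i # is) = bind_pmf (bernoulli_pmf (1 - q i)) (\<lambda>b. map_pmf (\<lambda>k. of_bool b + k) (thinning q is))"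

lemma set_pmf_thinning: "set_pmf (thinning q is) \<subseteq> {..length is}"
  by (induction "is") auto

lemma nn_integral_thinning_power:
  assumes "\<forall>i\<in>set is. 0 \<le> q i \<and> q i \<le> 1" "0 \<le> x"
  shows "(\<integral>\<^sup>+k. ennreal (x ^ k) \<partial>thinning q is) = ennreal (\<Prod>i\<leftarrow>is. x * (1 - q i) + q i)"
  using assms(1)
proof (induction "is")
  case (Cons i "is")
  let ?P = "\<Prod>i\<leftarrow>is. x * (1 - q i) + q i"
  have qi: "0 \<le> q i" "q i \<le> 1" and "0 \<le> ?P"
    using Cons.prems assms(2) by (auto intro!: prod_list_nonneg)
  then have "(\<integral>\<^sup>+k. ennreal (x ^ k) \<partial>thinning q (i # is)) =
      ennreal (x * ?P) * ennreal (1 - q i) + ennreal ?P * ennreal (q i)"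
    using Cons assms(2)
    by (simp add: map_pmf_def[symmetric] ennreal_mult nn_integral_cmult mult_ac)
  also have "\<dots> = ennreal (x * ?P * (1 - q i) + ?P * q i)"
    using qi \<open>0 \<le> ?P\<close> assms(2) by (subst ennreal_plus) (simp_all add: ennreal_mult)
  finally show ?case
    by (simp add: algebra_simps)
qed simp

lemma nn_integral_thinning:
  assumes "\<forall>i\<in>set is. 0 \<le> q i \<and> q i \<le> 1"
  shows "(\<integral>\<^sup>+k. ennreal (real k) \<partial>thinning q is) = ennreal (\<Sum>i\<leftarrow>is. 1 - q i)"
  using assms
proof (induction "is")
  case (Cons i "is")
  let ?m = "\<Sum>i\<leftarrow>is. 1 - q i"
  have qi: "0 \<le> q i" "q i \<le> 1" and "0 \<le> ?m"
    using Cons.prems by (auto intro!: sum_list_nonneg)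
  then have "(\<integral>\<^sup>+k. ennreal (real k) \<partial>thinning q (i # is)) = ennreal (1 - q i) + ennreal ?m"
    using Cons by (simp add: map_pmf_def[symmetric] nn_integral_add)
  also have "\<dots> = ennreal (\<Sum>i\<leftarrow>i # is. 1 - q i)"
    using qi \<open>0 \<le> ?m\<close> by (simp add: ennreal_plus)
  finally show ?case .
qed simp

lemma convex_on_power_nonneg: "convex_on {0::real..} (\<lambda>x. x ^ n)"
  by (cases "even n") (auto intro: convex_on_subset[OF convex_power_even] convex_power_odd)

lemma power_expectation_le:
  fixes M :: "'a pmf" and X :: "'a \<Rightarrow> real"
  assumes "finite (set_pmf M)" "\<And>x. x \<in> set_pmf M \<Longrightarrow> 0 \<le> X x"
  shows "measure_pmf.expectation M X ^ n \<le> measure_pmf.expectation M (\<lambda>x. X x ^ n)"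
proof -
  have "measure_pmf.expectation M X = (\<Sum>x\<in>set_pmf M. pmf M x *\<^sub>R X x)"
    by (rule integral_measure_pmf[OF assms(1)]) (simp add: set_pmf_eq)
  moreover have "measure_pmf.expectation M (\<lambda>x. X x ^ n) = (\<Sum>x\<in>set_pmf M. pmf M x * X x ^ n)"
    by (subst integral_measure_pmf[OF assms(1)]) (auto simp: set_pmf_eq)
  moreover have "(\<Sum>x\<in>set_pmf M. pmf M x *\<^sub>R X x) ^ n \<le> (\<Sum>x\<in>set_pmf M. pmf M x * X x ^ n)"
    using assms by (intro convex_on_sum[OF _ _ convex_on_power_nonneg])
                   (auto simp: sum_pmf_eq_1 set_pmf_not_empty)
  ultimately show ?thesis by simp
qed

lemma nn_integral_thinning_moment_ge:
  fixes q :: "nat \<Rightarrow> real"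
  assumes "\<forall>i\<in>set is. 0 \<le> q i \<and> q i \<le> qmax" "qmax \<le> 1"
  shows "ennreal (((1 - qmax) * length is) ^ r) \<le> (\<integral>\<^sup>+k. ennreal (real k ^ r) \<partial>thinning q is)"
proof -
  have fin: "finite (set_pmf (thinning q is))"
    using set_pmf_thinning finite_subset by blast
  have q: "\<forall>i\<in>set is. 0 \<le> q i \<and> q i \<le> 1"
    using assms by (auto intro: order_trans)
  have "ennreal (measure_pmf.expectation (thinning q is) real) = ennreal (\<Sum>i\<leftarrow>is. 1 - q i)"
    using q fin
    by (subst nn_integral_thinning[symmetric]) (auto simp: nn_integral_eq_integral integrable_measure_pmf_finite)
  then have "measure_pmf.expectation (thinning q is) real = (\<Sum>i\<leftarrow>is. 1 - q i)"
    using q by (subst (asm) ennreal_inj) (auto intro!: sum_list_nonneg)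
  moreover have "(1 - qmax) * length is \<le> (\<Sum>i\<leftarrow>is. 1 - q i)"
    using assms(1) by (induction "is") (auto simp: algebra_simps)
  ultimately have "(1 - qmax) * length is \<le> measure_pmf.expectation (thinning q is) real"
    by simp
  then have "((1 - qmax) * length is) ^ r \<le> measure_pmf.expectation (thinning q is) real ^ r"
    using assms(2) by (intro power_mono) auto
  also have "\<dots> \<le> measure_pmf.expectation (thinning q is) (\<lambda>k. real k ^ r)"
    using fin by (rule power_expectation_le) simp
  finally show ?thesis
    using fin by (simp add: nn_integral_eq_integral integrable_measure_pmf_finite)
qed

lemma thinned_gw_eq_transform_mixture:
  fixes q :: "nat \<Rightarrow> real"
  assumes supp: "\<forall>i\<in>S. set_pmf (p i) \<subseteq> fin_vecs S"
    and suppY: "\<forall>i\<in>S. set_pmf (pY i) \<subseteq> fin_vecs S"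
    and i0: "i0 \<in> S"
    and q: "\<forall>j. 0 \<le> q j \<and> q j \<le> 1" "\<forall>j\<in>S. q j < 1"
    and transform: "\<forall>i\<in>S. \<forall>s. (\<forall>j. 0 \<le> s j \<and> s j \<le> 1) \<longrightarrow>
              pgf pY i s = (pgf p i (\<lambda>j. s j * (1 - q j) + q j) - q i) / (1 - q i)"
  shows "bind_pmf (gw p i0 t) (\<lambda>z. thinning q (individuals z)) =
    bind_pmf (bernoulli_pmf (1 - q i0)) (\<lambda>b. if b then map_pmf popsize (gw pY i0 t) else return_pmf 0)"
proof (rule pmf_eqI_pgf)
  fix x :: real assume "0 < x" "x < 1"
  then have x: "(\<lambda>_. x) \<in> unit_cube"
    by (simp add: unit_cube_def)
  let ?\<phi> = "\<lambda>j. x * (1 - q j) + q j"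
  let ?f = "vec_pgf (gw p i0 t) ?\<phi>"
  have "1 - q i0 \<noteq> 0"
    using q(2) i0 by auto
  have "(\<integral>\<^sup>+k. ennreal (x ^ k) \<partial>bind_pmf (gw p i0 t) (\<lambda>z. thinning q (individuals z))) =
      (\<integral>\<^sup>+z. ennreal (vec_power ?\<phi> z) \<partial>gw p i0 t)"
  proof (simp, intro nn_integral_cong_AE, unfold AE_measure_pmf_iff, intro ballI)
    fix z assume "z \<in> set_pmf (gw p i0 t)"
    note z = individuals_gw[OF supp i0 this]
    show "(\<integral>\<^sup>+k. ennreal (x ^ k) \<partial>thinning q (individuals z)) = ennreal (vec_power ?\<phi> z)"
      using q(1) \<open>0 < x\<close>
      by (simp add: nn_integral_thinning_power prod_list_individuals[OF z(1)] vec_power_def)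
  qed
  also have "\<dots> = ennreal ?f"
    by (rule nn_integral_vec_power[OF affine_shift_unit_cube[OF x q(1)]])
  also have "?f = (1 - q i0) * vec_pgf (gw pY i0 t) (\<lambda>_. x) + q i0"
    using vec_pgf_gw_transform[OF supp suppY i0 q transform x] \<open>1 - q i0 \<noteq> 0\<close> by simp
  also have "ennreal ((1 - q i0) * vec_pgf (gw pY i0 t) (\<lambda>_. x) + q i0) =
      ennreal (1 - q i0) * ennreal (vec_pgf (gw pY i0 t) (\<lambda>_. x)) + ennreal (q i0)"
    using q vec_pgf_unit_cube[OF x] by (simp add: ennreal_mult ennreal_plus)
  also have "\<dots> = (\<integral>\<^sup>+k. ennreal (x ^ k)
      \<partial>bind_pmf (bernoulli_pmf (1 - q i0)) (\<lambda>b. if b then map_pmf popsize (gw pY i0 t) else return_pmf 0))"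
    using q by (simp add: nn_integral_vec_power[OF x, symmetric] vec_power_const mult.commute)
  finally show "(\<integral>\<^sup>+k. ennreal (x ^ k) \<partial>bind_pmf (gw p i0 t) (\<lambda>z. thinning q (individuals z))) = \<dots>" .
qed

lemma nn_integral_gw_moment_le_transform:
  fixes q :: "nat \<Rightarrow> real"
  assumes supp: "\<forall>i\<in>S. set_pmf (p i) \<subseteq> fin_vecs S"
    and suppY: "\<forall>i\<in>S. set_pmf (pY i) \<subseteq> fin_vecs S"
    and i0: "i0 \<in> S"
    and q: "\<forall>j. 0 \<le> q j \<and> q j \<le> 1" "\<forall>j\<in>S. q j \<le> qmax" "qmax < 1"
    and transform: "\<forall>i\<in>S. \<forall>s. (\<forall>j. 0 \<le> s j \<and> s j \<le> 1) \<longrightarrow>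
              pgf pY i s = (pgf p i (\<lambda>j. s j * (1 - q j) + q j) - q i) / (1 - q i)"
    and r: "r > 0"
  shows "ennreal ((1 - qmax) ^ r) * (\<integral>\<^sup>+z. ennreal (real (popsize z) ^ r) \<partial>gw p i0 t)
    \<le> ennreal (1 - q i0) * (\<integral>\<^sup>+y. ennreal (real (popsize y) ^ r) \<partial>gw pY i0 t)"
proof -
  have "\<forall>j\<in>S. q j < 1"
    using q by force
  note mixture = thinned_gw_eq_transform_mixture[OF supp suppY i0 q(1) this transform]
  have "ennreal ((1 - qmax) ^ r) * (\<integral>\<^sup>+z. ennreal (real (popsize z) ^ r) \<partial>gw p i0 t) =
      (\<integral>\<^sup>+z. ennreal (((1 - qmax) * length (individuals z)) ^ r) \<partial>gw p i0 t)"
    using q(3)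
    by (auto simp: nn_integral_cmult[symmetric] ennreal_mult[symmetric] power_mult_distrib AE_measure_pmf_iff
             length_individuals[OF individuals_gw(1)[OF supp i0]] intro!: nn_integral_cong_AE)
  also have "\<dots> \<le> (\<integral>\<^sup>+z. \<integral>\<^sup>+k. ennreal (real k ^ r) \<partial>thinning q (individuals z) \<partial>gw p i0 t)"
    using q individuals_gw(2)[OF supp i0]
    by (intro nn_integral_mono_AE) (fastforce simp: AE_measure_pmf_iff intro!: nn_integral_thinning_moment_ge)
  also have "\<dots> = ennreal (1 - q i0) * (\<integral>\<^sup>+y. ennreal (real (popsize y) ^ r) \<partial>gw pY i0 t)"
    using arg_cong[OF mixture, of "\<lambda>M. \<integral>\<^sup>+k. ennreal (real k ^ r) \<partial>M"] q(1) r
    by (simp add: map_pmf_def[symmetric] mult.commute)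
  finally show ?thesis .
qed

section \<open>Survival probability and inverse moments\<close>

lemma bdd_above_extinction_probs: "bdd_above (range (\<lambda>t. measure_pmf.prob (gw p i t) {z. popsize z = 0}))"
  by (rule bdd_aboveI[where M=1]) auto

lemma ext_prob_nonneg: "0 \<le> ext_prob p i"
  unfolding ext_prob_def by (rule cSUP_upper2[OF bdd_above_extinction_probs, of 0]) auto

lemma ext_prob_le_1: "ext_prob p i \<le> 1"
  unfolding ext_prob_def by (rule cSUP_least) auto

lemma prob_survival_ge: "1 - ext_prob p i \<le> measure_pmf.prob (gw p i t) {z. popsize z > 0}"
proof -
  have "measure_pmf.prob (gw p i t) {z. popsize z = 0} \<le> ext_prob p i"
    unfolding ext_prob_def by (rule cSUP_upper[OF _ bdd_above_extinction_probs]) simp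
  moreover have "{z. popsize z > 0} = UNIV - {z. popsize z = 0}"
    by auto
  ultimately show ?thesis
    using measure_pmf.prob_compl[of "{z. popsize z = 0}" "gw p i t"] by simp
qed

lemma prob_pos_squared_le:
  fixes M :: "'a pmf" and X :: "'a \<Rightarrow> nat"
  shows "ennreal (measure_pmf.prob M {x. X x > 0} ^ 2)
    \<le> (\<integral>\<^sup>+x. ennreal (real (X x) ^ r) \<partial>M) *
       ennreal (measure_pmf.expectation M (\<lambda>x. if X x > 0 then 1 / real (X x) ^ r else 0))"
proof -
  let ?f = "\<lambda>x. ennreal (sqrt (real (X x) ^ r))"
  let ?g = "\<lambda>x. ennreal (if X x > 0 then 1 / sqrt (real (X x) ^ r) else 0)"
  have sq: "ennreal (sqrt y) ^ 2 = ennreal y" "ennreal (1 / sqrt y) ^ 2 = ennreal (1 / y)"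
    if "0 \<le> y" for y :: real
    using that by (subst ennreal_power; simp add: power_divide)+
  have "(\<integral>\<^sup>+x. ?f x * ?g x \<partial>M) = (\<integral>\<^sup>+x. indicator {x. X x > 0} x \<partial>M)"
    by (intro nn_integral_cong) (auto simp: ennreal_mult[symmetric] indicator_def)
  also have "\<dots> = ennreal (measure_pmf.prob M {x. X x > 0})"
    by (simp add: measure_pmf.emeasure_eq_measure)
  finally have "ennreal (measure_pmf.prob M {x. X x > 0} ^ 2) = (\<integral>\<^sup>+x. ?f x * ?g x \<partial>M)\<^sup>2"
    by (simp add: ennreal_power)
  also have "\<dots> \<le> (\<integral>\<^sup>+x. ?f x ^ 2 \<partial>M) * (\<integral>\<^sup>+x. ?g x ^ 2 \<partial>M)"
    by (rule Cauchy_Schwarz_nn_integral) simp_all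
  also have "(\<integral>\<^sup>+x. ?f x ^ 2 \<partial>M) = (\<integral>\<^sup>+x. ennreal (real (X x) ^ r) \<partial>M)"
    by (intro nn_integral_cong) (simp add: sq)
  also have "(\<integral>\<^sup>+x. ?g x ^ 2 \<partial>M) =
      (\<integral>\<^sup>+x. ennreal (if X x > 0 then 1 / real (X x) ^ r else 0) \<partial>M)"
    by (intro nn_integral_cong) (simp add: sq)
  also have "\<dots> = ennreal (measure_pmf.expectation M (\<lambda>x. if X x > 0 then 1 / real (X x) ^ r else 0))"
    by (intro nn_integral_eq_integral measure_pmf.integrable_const_bound[where B=1]) auto
  finally show ?thesis .
qed

lemma inverse_moment_lower_bound:
  fixes M :: "'a pmf" and X :: "'a \<Rightarrow> nat" and E :: ennreal and c q :: real
  assumes moment: "ennreal c * (\<integral>\<^sup>+x. ennreal (real (X x) ^ r) \<partial>M) \<le> ennreal q * E"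
    and "0 < c" "0 < q" and survival: "q \<le> measure_pmf.prob M {x. X x > 0}"
  shows "ennreal c / E \<le> ennreal (measure_pmf.expectation M (\<lambda>x. if X x > 0 then 1 / real (X x) ^ r else 0)
                          / measure_pmf.prob M {x. X x > 0})"
proof (cases E)
  case (real e)
  let ?P = "measure_pmf.prob M {x. X x > 0}"
  let ?B = "measure_pmf.expectation M (\<lambda>x. if X x > 0 then 1 / real (X x) ^ r else 0)"
  have "ennreal q * E < \<top>"
    using real by (simp add: ennreal_mult_less_top)
  with moment have "ennreal c * (\<integral>\<^sup>+x. ennreal (real (X x) ^ r) \<partial>M) < \<top>"
    by (rule le_less_trans)
  then have "(\<integral>\<^sup>+x. ennreal (real (X x) ^ r) \<partial>M) \<noteq> \<top>"
    using \<open>0 < c\<close> by (auto simp: ennreal_mult_less_top)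
  then obtain a where a: "(\<integral>\<^sup>+x. ennreal (real (X x) ^ r) \<partial>M) = ennreal a" "0 \<le> a"
    by (cases "\<integral>\<^sup>+x. ennreal (real (X x) ^ r) \<partial>M") auto
  have "0 \<le> ?B"
    by (intro integral_nonneg_AE) auto
  have ca: "c * a \<le> q * e"
    using moment real a \<open>0 < c\<close> \<open>0 < q\<close> by (simp add: ennreal_mult[symmetric] ennreal_le_iff)
  have PaB: "?P ^ 2 \<le> a * ?B"
    using prob_pos_squared_le[of M X r] a \<open>0 \<le> ?B\<close> by (simp add: ennreal_mult[symmetric] ennreal_le_iff)
  have "0 < ?P"
    using survival \<open>0 < q\<close> by linarith
  then have "0 < a * ?B"
    using PaB by (meson less_le_trans zero_less_power)
  then have "0 < a"
    using \<open>0 \<le> a\<close> \<open>0 \<le> ?B\<close> by (simp add: zero_less_mult_iff)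
  then have "0 < q * e"
    using ca mult_pos_pos[OF \<open>0 < c\<close>] by (meson less_le_trans)
  then have "0 < e"
    using \<open>0 < q\<close> by (simp add: zero_less_mult_iff)
  have "c / e \<le> q / a"
    using ca \<open>0 < e\<close> \<open>0 < a\<close> by (simp add: divide_simps mult.commute)
  also have "\<dots> \<le> ?P / a"
    using survival \<open>0 < a\<close> by (simp add: divide_right_mono)
  also have "\<dots> \<le> ?B / ?P"
    using PaB \<open>0 < a\<close> \<open>0 < ?P\<close> by (simp add: divide_simps power2_eq_square mult.commute)
  finally show ?thesis
    using real \<open>0 < e\<close> \<open>0 < c\<close> by (simp add: divide_ennreal ennreal_leI)
qed simp

theorem mainTheorem13:
  fixes S :: "nat set" and p pY :: "nat \<Rightarrow> (nat \<Rightarrow> nat) pmf"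
    and i0 t r :: nat and R :: real and \<nu> u :: "nat \<Rightarrow> real"
  assumes S: "S = UNIV \<or> (\<exists>d\<ge>1. S = {..<d})"
    and i0: "i0 \<in> S"
    and supp: "\<forall>i\<in>S. set_pmf (p i) \<subseteq> fin_vecs S"
    \<comment> \<open>A1\<close>
    and irred: "\<forall>i\<in>S. \<forall>j\<in>S. \<exists>n\<ge>1. mpow p S n i j > 0"
    and fin_mom: "\<forall>n. \<forall>i\<in>S. \<forall>j\<in>S. mpow p S n i j < \<infinity>"
    and R_def: "\<forall>i\<in>S. \<forall>j\<in>S. conv_radius (\<lambda>n. enn2real (mpow p S n i j)) = ereal R"
    \<comment> \<open>A2\<close>
    and R_rec: "\<forall>i\<in>S. \<forall>j\<in>S. (\<Sum>n. mpow p S n i j * ennreal R ^ n) = \<infinity>"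
    and \<nu>_pos: "\<forall>i\<in>S. \<nu> i > 0" and u_pos: "\<forall>i\<in>S. u i > 0"
    and \<nu>_eig: "\<forall>j\<in>S. ennreal R * (\<integral>\<^sup>+ i. ennreal (\<nu> i) * mean_matrix p i j \<partial>count_space S) = ennreal (\<nu> j)"
    and u_eig: "\<forall>i\<in>S. ennreal R * (\<integral>\<^sup>+ j. mean_matrix p i j * ennreal (u j) \<partial>count_space S) = ennreal (u i)"
    and u\<nu>: "(\<integral>\<^sup>+ i. ennreal (u i * \<nu> i) \<partial>count_space S) = 1"
    and \<nu>_sum: "(\<integral>\<^sup>+ i. ennreal (\<nu> i) \<partial>count_space S) = 1"
    and R01: "0 < R" "R < 1"
    \<comment> \<open>A4\<close>
    and A4: "Sup (ext_prob p ` S) < 1"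
    \<comment> \<open>A5\<close>
    and A5: "\<exists>c>0. \<forall>i\<in>S. u i \<ge> c"
    \<comment> \<open>Harris--Sevastyanov transform: offspring laws pY with generating functions F\<close>
    and suppY: "\<forall>i\<in>S. set_pmf (pY i) \<subseteq> fin_vecs S"
    and HS: "\<forall>i\<in>S. \<forall>s. (\<forall>j. 0 \<le> s j \<and> s j \<le> 1) \<longrightarrow>
              pgf pY i s = (pgf p i (\<lambda>j. s j * (1 - ext_prob p j) + ext_prob p j) - ext_prob p i)
                           / (1 - ext_prob p i)"
    and t: "t \<ge> 1" and r: "r \<ge> 1"
  shows "ennreal ((1 - Sup (ext_prob p ` S)) ^ r)
           / (\<integral>\<^sup>+ y. ennreal (real (popsize y) ^ r) \<partial>measure_pmf (gw pY i0 t))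
         \<le> ennreal (measure_pmf.expectation (gw p i0 t)
                (\<lambda>z. if popsize z > 0 then 1 / real (popsize z) ^ r else 0)
              / measure_pmf.prob (gw p i0 t) {z. popsize z > 0})"
proof -
  let ?q = "ext_prob p" and ?qmax = "Sup (ext_prob p ` S)"
  have q_range: "\<forall>j. 0 \<le> ?q j \<and> ?q j \<le> 1"
    using ext_prob_nonneg ext_prob_le_1 by blast
  have "bdd_above (?q ` S)"
    using ext_prob_le_1 by (intro bdd_aboveI2) blast
  then have q_le_qmax: "\<forall>j\<in>S. ?q j \<le> ?qmax"
    by (simp add: cSup_upper)
  have "0 < 1 - ?q i0"
    using q_le_qmax i0 A4 by fastforce
  moreover have "0 < (1 - ?qmax) ^ r"
    using A4 by simp
  moreover note nn_integral_gw_moment_le_transform[OF supp suppY i0 q_range q_le_qmax A4 HS, of r t]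
  ultimately show ?thesis
    using r by (auto intro: inverse_moment_lower_bound[OF _ _ _ prob_survival_ge])
qed

end
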